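(* Let $A(x)=\sum_{n\ge 0}|\mathfrak D^1_{2n}(4213)|\,x^n$ and $B(x)=\sum_{n\ge 0}|\mathfrak D^1_{2n}(1342)|\,x^n$ be the ordinary generating functions. Then $A(x)=\dfrac{1}{1-xB(x)}$.
   Context: A Dumont permutation of the first kind of length $2n$ is a permutation $\pi\in\mathfrak S_{2n}$ such that for every $i=1,\dots,2n$: if $\pi(i)$ is even then $i<2n$ and $\pi(i)>\pi(i+1)$; if $\pi(i)$ is odd then $i=2n$ or $\pi(i)<\pi(i+1)$. $\mathfrak D^1_{2n}$ denotes the set of these ($\mathfrak D^1_0$ consists of the empty permutation). A permutation $\sigma$ contains a pattern $\tau\in\mathfrak S_k$ if some subsequence $(\sigma(i_1),\dots,\sigma(i_k))$, $i_1<\dots<i_k$, is order-isomorphic to $\tau$; otherwise $\sigma$ avoids $\tau$. $\mathfrak D^1_{2n}(T)$ denotes the set of permutations in $\mathfrak D^1_{2n}$ avoiding every pattern in $T$. *)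

theory Defs
  imports "HOL-Computational_Algebra.Formal_Power_Series"
begin

text \<open>Permutations of {1..m} are represented as lists p of length m with
  set p = {1..m}; position i (0-based) holds the value pi(i+1).\<close>

definition is_perm :: "nat \<Rightarrow> nat list \<Rightarrow> bool" where
  "is_perm m p \<longleftrightarrow> length p = m \<and> distinct p \<and> set p = {1..m}"

definition dumont1_cond :: "nat list \<Rightarrow> bool" where
  "dumont1_cond p \<longleftrightarrow>
     (\<forall>i < length p.
        (even (p ! i) \<longrightarrow> i + 1 < length p \<and> p ! i > p ! (i + 1)) \<and>
        (odd (p ! i) \<longrightarrow> i + 1 = length p \<or> p ! i < p ! (i + 1)))"

definition contains_pattern :: "nat list \<Rightarrow> nat list \<Rightarrow> bool" where
  "contains_pattern \<sigma> \<tau> \<longleftrightarrow>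
     (\<exists>idx. length idx = length \<tau> \<and> sorted_wrt (<) idx \<and>
        (\<forall>j < length idx. idx ! j < length \<sigma>) \<and>
        (\<forall>a < length \<tau>. \<forall>b < length \<tau>.
            (\<sigma> ! (idx ! a) < \<sigma> ! (idx ! b) \<longleftrightarrow> \<tau> ! a < \<tau> ! b)))"

definition avoids :: "nat list \<Rightarrow> nat list \<Rightarrow> bool" where
  "avoids \<sigma> \<tau> \<longleftrightarrow> \<not> contains_pattern \<sigma> \<tau>"

definition dumont1_avoid :: "nat \<Rightarrow> nat list set \<Rightarrow> nat list set" where
  "dumont1_avoid n T =
     {p. is_perm (2 * n) p \<and> dumont1_cond p \<and> (\<forall>\<tau>\<in>T. avoids p \<tau>)}"

end

theory Submission
  imports Defs
begin

(* In a Dumont permutation of the first kind the entry 2 is a descent top, so it is immediately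
   followed by 1. If pi avoids 4213, every entry to the left of this factor 21 is smaller than
   every entry to its right, so pi = alpha 2 1 beta where alpha is a permutation of {3..2k+2}
   and beta one of {2k+3..2n+2}; the length of alpha is even because its largest entry is a
   descent top. Complementing alpha (x |-> 2k+3-x, an odd constant, so parities swap and
   comparisons reverse) gives a 1342-avoiding Dumont permutation of length 2k, and shifting
   beta down gives a 4213-avoiding one of length 2(n-k). This bijection yields
   a(n+1) = sum_k b(k) a(n-k), i.e. A = 1 + x B A. *)

definition dumont_step :: "nat \<Rightarrow> nat \<Rightarrow> bool" where
  "dumont_step x y \<longleftrightarrow> (if even x then y < x else x < y)"

lemma dumont1_cond_iff_successively:
  "dumont1_cond p \<longleftrightarrow> successively dumont_step p \<and> (p \<noteq> [] \<longrightarrow> odd (last p))"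
proof (induction p rule: induct_list012)
  case (3 x y zs)
  have "dumont1_cond (x # y # zs) \<longleftrightarrow> dumont_step x y \<and> dumont1_cond (y # zs)"
    unfolding dumont1_cond_def dumont_step_def
    by (auto simp: All_less_Suc2 nth_Cons split: nat.splits)
  with 3 show ?case by simp
qed (auto simp: dumont1_cond_def)

lemma dumont_step_complement:
  assumes "odd c" "x \<le> c" "y \<le> c"
  shows "dumont_step (c - x) (c - y) \<longleftrightarrow> dumont_step x y"
  using assms by (auto simp: dumont_step_def)

lemma dumont_step_shift:
  "even e \<Longrightarrow> dumont_step (x + e) (y + e) \<longleftrightarrow> dumont_step x y"
  by (simp add: dumont_step_def)

lemma successively_dumont_step_max_even:
  assumes "successively dumont_step xs" "distinct xs" "x \<in> set xs" "x \<noteq> last xs"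
    "\<forall>y\<in>set xs. y \<le> x"
  shows "even x"
proof -
  obtain us ws where xs: "xs = us @ x # ws"
    using assms(3) by (meson split_list)
  then obtain w ws' where ws: "ws = w # ws'"
    using assms(4) by (cases ws) auto
  have "dumont_step x w" "w \<noteq> x" "w \<le> x"
    using assms(1,2,5) by (auto simp: xs ws successively_append_iff)
  then show ?thesis
    by (auto simp: dumont_step_def split: if_splits)
qed

lemma dumont1_cond_split_21:
  assumes "dumont1_cond p" "0 \<notin> set p" "2 \<in> set p"
  obtains a b where "p = a @ [2, 1] @ b"
proof -
  obtain a r where p: "p = a @ 2 # r"
    using assms(3) by (meson split_list)
  have succ: "successively dumont_step p" and "odd (last p)"
    using assms(1) by (auto simp: dumont1_cond_iff_successively p)
  then obtain y b where r: "r = y # b"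
    by (cases r) (auto simp: p)
  then have "y < 2" "y \<noteq> 0"
    using succ assms(2) by (auto simp: p successively_append_iff dumont_step_def)
  then have "y = 1"
    by simp
  with p r show thesis
    using that by simp
qed

lemma contains_pattern_4213_iff:
  "contains_pattern s [4,2,1,3] \<longleftrightarrow>
     (\<exists>i j q l. i < j \<and> j < q \<and> q < l \<and> l < length s \<and>
        s ! q < s ! j \<and> s ! j < s ! l \<and> s ! l < s ! i)"
proof
  assume "contains_pattern s [4,2,1,3]"
  then obtain idx where idx: "length idx = length [4,2,1,3::nat]" "sorted_wrt (<) idx"
    "\<forall>j < length idx. idx ! j < length s"
    "\<forall>a < length [4,2,1,3::nat]. \<forall>b < length [4,2,1,3::nat].
       s ! (idx ! a) < s ! (idx ! b) \<longleftrightarrow> [4,2,1,3::nat] ! a < [4,2,1,3] ! b"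
    unfolding contains_pattern_def by blast
  then obtain i j q l where "idx = [i, j, q, l]"
    by (auto simp: numeral_eq_Suc length_Suc_conv)
  with idx show "\<exists>i j q l. i < j \<and> j < q \<and> q < l \<and> l < length s \<and>
        s ! q < s ! j \<and> s ! j < s ! l \<and> s ! l < s ! i"
    by (auto simp: numeral_eq_Suc All_less_Suc)
next
  assume "\<exists>i j q l. i < j \<and> j < q \<and> q < l \<and> l < length s \<and>
        s ! q < s ! j \<and> s ! j < s ! l \<and> s ! l < s ! i"
  then obtain i j q l where "i < j" "j < q" "q < l" "l < length s"
    "s ! q < s ! j" "s ! j < s ! l" "s ! l < s ! i" by blast
  then show "contains_pattern s [4,2,1,3]"
    unfolding contains_pattern_def
    by (intro exI[of _ "[i, j, q, l]"]) (auto simp: numeral_eq_Suc All_less_Suc)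
qed

lemma contains_pattern_appendI1:
  assumes "contains_pattern xs t"
  shows "contains_pattern (xs @ ys) t"
proof -
  obtain idx where idx: "length idx = length t" "sorted_wrt (<) idx"
    "\<forall>j < length idx. idx ! j < length xs"
    "\<forall>a < length t. \<forall>b < length t. xs ! (idx ! a) < xs ! (idx ! b) \<longleftrightarrow> t ! a < t ! b"
    using assms unfolding contains_pattern_def by blast
  then have "\<forall>a < length t. \<forall>b < length t.
      (xs @ ys) ! (idx ! a) < (xs @ ys) ! (idx ! b) \<longleftrightarrow> t ! a < t ! b"
    by (simp add: nth_append)
  with idx show ?thesis
    unfolding contains_pattern_def by (intro exI[of _ idx]) auto
qed

lemma contains_pattern_appendI2:
  assumes "contains_pattern ys t"
  shows "contains_pattern (xs @ ys) t"
proof -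
  obtain idx where idx: "length idx = length t" "sorted_wrt (<) idx"
    "\<forall>j < length idx. idx ! j < length ys"
    "\<forall>a < length t. \<forall>b < length t. ys ! (idx ! a) < ys ! (idx ! b) \<longleftrightarrow> t ! a < t ! b"
    using assms unfolding contains_pattern_def by blast
  let ?idx = "map ((+) (length xs)) idx"
  from idx have "\<forall>a < length t. \<forall>b < length t.
      (xs @ ys) ! (?idx ! a) < (xs @ ys) ! (?idx ! b) \<longleftrightarrow> t ! a < t ! b"
    by (simp add: nth_append)
  with idx show ?thesis
    unfolding contains_pattern_def by (intro exI[of _ ?idx]) (auto simp: sorted_wrt_map)
qed

lemma contains_pattern_order_cong:
  assumes "length s' = length s"
    and "\<And>i j. i < length s \<Longrightarrow> j < length s \<Longrightarrow> s' ! i < s' ! j \<longleftrightarrow> s ! i < s ! j"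
  shows "contains_pattern s' t \<longleftrightarrow> contains_pattern s t"
proof -
  have "(\<forall>a<length t. \<forall>b<length t. s' ! (idx ! a) < s' ! (idx ! b) \<longleftrightarrow> t ! a < t ! b) \<longleftrightarrow>
        (\<forall>a<length t. \<forall>b<length t. s ! (idx ! a) < s ! (idx ! b) \<longleftrightarrow> t ! a < t ! b)"
    if "length idx = length t" "\<forall>j<length idx. idx ! j < length s" for idx
    using that assms(2) by auto
  then show ?thesis
    unfolding contains_pattern_def assms(1) by blast
qed

lemma contains_pattern_map_strict_mono:
  assumes "strict_mono_on (set s) f"
  shows "contains_pattern (map f s) t \<longleftrightarrow> contains_pattern s t"
  by (rule contains_pattern_order_cong) (simp_all add: strict_mono_on_less[OF assms])

lemma contains_pattern_map_strict_antimono: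
  assumes f: "strict_antimono_on (set s) f" and c: "\<forall>x\<in>set t. x \<le> c"
  shows "contains_pattern (map f s) t \<longleftrightarrow> contains_pattern s (map (\<lambda>x. c - x) t)"
proof -
  have f_less: "f x < f y \<longleftrightarrow> y < x" if "x \<in> set s" "y \<in> set s" for x y
    using f that by (metis linorder_neq_iff monotone_onD order.asym)
  have c_less: "c - x < c - y \<longleftrightarrow> y < x" if "x \<in> set t" "y \<in> set t" for x y
    using c that by auto
  have "(\<forall>a<length t. \<forall>b<length t. map f s ! (idx ! a) < map f s ! (idx ! b) \<longleftrightarrow> t ! a < t ! b) \<longleftrightarrow>
        (\<forall>a<length t. \<forall>b<length t.
           s ! (idx ! a) < s ! (idx ! b) \<longleftrightarrow> map (\<lambda>x. c - x) t ! a < map (\<lambda>x. c - x) t ! b)"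
    if "length idx = length t" "\<forall>j<length idx. idx ! j < length s" for idx
    using that by (auto simp: f_less c_less)
  then show ?thesis
    unfolding contains_pattern_def length_map by blast
qed

lemma contains_4213_append_21_iff:
  assumes a_gt_2: "\<forall>x\<in>set a. 2 < x" and a_lt_b: "\<forall>x\<in>set a. \<forall>y\<in>set b. x < y"
  shows "contains_pattern (a @ [2, 1] @ b) [4,2,1,3] \<longleftrightarrow>
    contains_pattern a [4,2,1,3] \<or> contains_pattern b [4,2,1,3]"
proof
  let ?p = "a @ [2, 1] @ b" and ?m = "length a"
  have p_a: "?p ! i = a ! i" if "i < ?m" for i
    using that by (simp add: nth_append)
  have p_b: "?p ! i = b ! (i - (?m + 2))" if "?m + 2 \<le> i" for i
    using that by (simp add: nth_append)
  have p_21: "?p ! ?m = 2" "?p ! Suc ?m = 1"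
    by (simp_all add: nth_append)
  assume "contains_pattern ?p [4,2,1,3]"
  then obtain i j q l where idx: "i < j" "j < q" "q < l" "l < length ?p"
    and val: "?p ! q < ?p ! j" "?p ! j < ?p ! l" "?p ! l < ?p ! i"
    unfolding contains_pattern_4213_iff by blast
  show "contains_pattern a [4,2,1,3] \<or> contains_pattern b [4,2,1,3]"
  proof (cases "i < ?m + 2")
    case True
    have "i \<noteq> ?m" "i \<noteq> Suc ?m"
      using val p_21 by auto
    with True have i: "i < ?m"
      by linarith
    have "l < ?m"
    proof -
      consider "l < ?m" | "l = ?m" | "l = Suc ?m" | "?m + 2 \<le> l"
        by linarith
      then show ?thesis
      proof cases
        case 2
        then have "?p ! q \<in> set a"
          using idx p_a by simp
        then show ?thesis
          using 2 val p_21 a_gt_2 by auto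
      next
        case 3
        then show ?thesis
          using val p_21 by simp
      next
        case 4
        then have "?p ! l \<in> set b"
          using idx p_b by simp
        moreover have "?p ! i \<in> set a"
          using i p_a by simp
        ultimately show ?thesis
          using val a_lt_b by fastforce
      qed
    qed
    then have "contains_pattern a [4,2,1,3]"
      unfolding contains_pattern_4213_iff using idx val p_a
      by (intro exI[of _ i] exI[of _ j] exI[of _ q] exI[of _ l]) auto
    then show ?thesis ..
  next
    case False
    then have "contains_pattern b [4,2,1,3]"
      unfolding contains_pattern_4213_iff using idx val p_b
      by (intro exI[of _ "i - (?m + 2)"] exI[of _ "j - (?m + 2)"] exI[of _ "q - (?m + 2)"]
          exI[of _ "l - (?m + 2)"]) auto
    then show ?thesis ..
  qed
next
  show "contains_pattern a [4,2,1,3] \<or> contains_pattern b [4,2,1,3] \<Longrightarrow>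
    contains_pattern (a @ [2, 1] @ b) [4,2,1,3]"
    using contains_pattern_appendI1 contains_pattern_appendI2[of b _ "a @ [2, 1]"] by auto
qed

lemma avoids_4213_append_21_le:
  assumes "\<not> contains_pattern (a @ [2, 1] @ b) [4,2,1,3]" "x \<in> set a" "y \<in> set b" "2 < y"
  shows "x \<le> y"
proof (rule ccontr)
  assume "\<not> x \<le> y"
  obtain u where u: "u < length a" "a ! u = x"
    using assms(2) by (meson in_set_conv_nth)
  obtain v where v: "v < length b" "b ! v = y"
    using assms(3) by (meson in_set_conv_nth)
  let ?p = "a @ [2, 1] @ b" and ?m = "length a"
  have "?p ! u = x" "?p ! ?m = 2" "?p ! Suc ?m = 1" "?p ! (?m + 2 + v) = y"
    using u v by (simp_all add: nth_append)
  then have "contains_pattern ?p [4,2,1,3]"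
    unfolding contains_pattern_4213_iff using u v assms(4) \<open>\<not> x \<le> y\<close>
    by (intro exI[of _ u] exI[of _ ?m] exI[of _ "Suc ?m"] exI[of _ "?m + 2 + v"]) auto
  with assms(1) show False ..
qed

lemma is_permI: "length xs = m \<Longrightarrow> distinct xs \<Longrightarrow> set xs \<subseteq> {1..m} \<Longrightarrow> is_perm m xs"
  unfolding is_perm_def
  by (metis card_atLeastAtMost card_subset_eq diff_Suc_1 distinct_card finite_atLeastAtMost)

lemma in_dumont1_avoid_singleton_iff:
  "p \<in> dumont1_avoid n {t} \<longleftrightarrow> is_perm (2 * n) p \<and> dumont1_cond p \<and> \<not> contains_pattern p t"
  by (simp add: dumont1_avoid_def avoids_def)

lemma finite_dumont1_avoid: "finite (dumont1_avoid n T)"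
proof (rule finite_subset)
  show "dumont1_avoid n T \<subseteq> {xs. set xs \<subseteq> {1..2 * n} \<and> length xs = 2 * n}"
    by (auto simp: dumont1_avoid_def is_perm_def)
qed (rule finite_lists_length_eq, simp)

lemma dumont1_avoid_0: "\<forall>t\<in>T. t \<noteq> [] \<Longrightarrow> dumont1_avoid 0 T = {[]}"
  by (auto simp: dumont1_avoid_def is_perm_def dumont1_cond_def avoids_def contains_pattern_def)
    (metis length_greater_0_conv)

lemma atLeastLessThan_split_if_less:
  fixes A B :: "nat set"
  assumes AB: "A \<union> B = {l..<h}" and less: "\<forall>x\<in>A. \<forall>y\<in>B. x < y"
  shows "A = {l..<l + card A}" "B = {l + card A..<h}"
proof (atomize (full), cases "B = {}")
  case True
  then show "A = {l..<l + card A} \<and> B = {l + card A..<h}"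
    using AB by (cases "l \<le> h") auto
next
  case False
  define t where "t = Min B"
  have fin: "finite B"
    using AB by (metis finite_Un finite_atLeastLessThan)
  have t: "t \<in> B" "\<forall>y\<in>B. t \<le> y"
    using False fin by (simp_all add: t_def)
  then have "l \<le> t" "t < h"
    using AB by auto
  have "A = {l..<t}"
  proof (intro set_eqI iffI)
    fix z assume z: "z \<in> {l..<t}"
    then have "z \<in> A \<union> B" "z \<notin> B"
      using AB t \<open>t < h\<close> by auto
    then show "z \<in> A" by blast
  qed (use AB less t in auto)
  moreover have "B = {t..<h}"
  proof (intro set_eqI iffI)
    fix z assume z: "z \<in> {t..<h}"
    have "z \<in> A \<union> B"
      using AB z \<open>l \<le> t\<close> by auto
    moreover have "z \<notin> A"
      using less t(1) z by (meson atLeastLessThan_iff leD)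
    ultimately show "z \<in> B" by blast
  qed (use AB t in auto)
  ultimately show "A = {l..<l + card A} \<and> B = {l + card A..<h}"
    using \<open>l \<le> t\<close> by simp
qed

definition dumont_join :: "nat \<Rightarrow> nat list \<Rightarrow> nat list \<Rightarrow> nat list" where
  "dumont_join k g d = map (\<lambda>x. 2 * k + 3 - x) g @ [2, 1] @ map (\<lambda>x. x + (2 * k + 2)) d"

lemma is_perm_dumont_join:
  assumes g: "is_perm (2 * k) g" and d: "is_perm (2 * l) d"
  shows "is_perm (2 * Suc (k + l)) (dumont_join k g d)"
proof (rule is_permI)
  let ?G = "map (\<lambda>x. 2 * k + 3 - x) g" and ?D = "map (\<lambda>x. x + (2 * k + 2)) d"
  have G: "set ?G \<subseteq> {3..2 * k + 2}" and D: "set ?D \<subseteq> {2 * k + 3..2 * Suc (k + l)}"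
    using g d by (auto simp: is_perm_def)
  have "inj_on (\<lambda>x. 2 * k + 3 - x) (set g)" "inj_on (\<lambda>x. x + (2 * k + 2)) (set d)"
    using g by (auto simp: is_perm_def intro!: inj_onI)
  then have "distinct ?G" "distinct ?D"
    using g d by (simp_all add: is_perm_def distinct_map)
  moreover have "set ?G \<inter> set ([2, 1] @ ?D) = {}" "set [2, 1] \<inter> set ?D = {}"
    using G D by fastforce+
  ultimately show "distinct (dumont_join k g d)"
    unfolding dumont_join_def by simp
  show "set (dumont_join k g d) \<subseteq> {1..2 * Suc (k + l)}"
    using G D unfolding dumont_join_def by auto
qed (use g d in \<open>simp add: dumont_join_def is_perm_def\<close>)

lemma dumont1_cond_dumont_join_iff:
  assumes "is_perm (2 * k) g"
  shows "dumont1_cond (dumont_join k g d) \<longleftrightarrow> dumont1_cond g \<and> dumont1_cond d"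
proof -
  let ?G = "map (\<lambda>x. 2 * k + 3 - x) g" and ?D = "map (\<lambda>x. x + (2 * k + 2)) d"
  have g_le: "\<forall>x\<in>set g. x \<le> 2 * k + 3"
    using assms by (auto simp: is_perm_def)
  have G: "successively dumont_step ?G \<longleftrightarrow> successively dumont_step g"
    unfolding successively_map using g_le
    by (intro successively_cong) (auto simp: dumont_step_complement)
  have "dumont_step (x + (2 * k + 2)) (y + (2 * k + 2)) \<longleftrightarrow> dumont_step x y" for x y
    by (rule dumont_step_shift) simp
  then have D: "successively dumont_step ?D \<longleftrightarrow> successively dumont_step d"
    unfolding successively_map by presburger
  have G2: "dumont_step (last ?G) 2 \<longleftrightarrow> odd (last g)" if "g \<noteq> []"
    using assms last_in_set[OF that] that by (auto simp: is_perm_def dumont_step_def last_map)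
  have "dumont_step 2 1"
    by (simp add: dumont_step_def)
  then have "successively dumont_step (dumont_join k g d) \<longleftrightarrow> successively dumont_step ?G \<and>
      (?G \<noteq> [] \<longrightarrow> dumont_step (last ?G) 2) \<and> successively dumont_step (1 # ?D)"
    unfolding dumont_join_def by (auto simp: successively_append_iff)
  also have "successively dumont_step (1 # ?D) \<longleftrightarrow> successively dumont_step d"
    using D by (auto simp: successively_Cons dumont_step_def hd_map)
  finally have "successively dumont_step (dumont_join k g d) \<longleftrightarrow>
      successively dumont_step g \<and> (g \<noteq> [] \<longrightarrow> odd (last g)) \<and> successively dumont_step d"
    using G G2 by auto
  moreover have "dumont_join k g d \<noteq> []"
    and "last (dumont_join k g d) = (if d = [] then 1 else last d + (2 * k + 2))"
    by (simp_all add: dumont_join_def last_map)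
  ultimately show ?thesis
    unfolding dumont1_cond_iff_successively by auto
qed

lemma contains_4213_dumont_join_iff:
  assumes g: "is_perm (2 * k) g" and d: "is_perm (2 * l) d"
  shows "contains_pattern (dumont_join k g d) [4,2,1,3] \<longleftrightarrow>
    contains_pattern g [1,3,4,2] \<or> contains_pattern d [4,2,1,3]"
proof -
  have "strict_antimono_on (set g) (\<lambda>x. 2 * k + 3 - x)"
    using g by (auto simp: is_perm_def intro!: monotone_onI)
  then have G: "contains_pattern (map (\<lambda>x. 2 * k + 3 - x) g) [4,2,1,3] \<longleftrightarrow>
      contains_pattern g [1,3,4,2]"
    using contains_pattern_map_strict_antimono[where c = 5] by simp
  have "strict_mono_on (set d) (\<lambda>x. x + (2 * k + 2))"
    by (auto intro!: monotone_onI)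
  then have D: "contains_pattern (map (\<lambda>x. x + (2 * k + 2)) d) [4,2,1,3] \<longleftrightarrow>
      contains_pattern d [4,2,1,3]"
    by (rule contains_pattern_map_strict_mono)
  have a_b: "\<forall>x\<in>set (map (\<lambda>x. 2 * k + 3 - x) g). 2 < x"
    "\<forall>x\<in>set (map (\<lambda>x. 2 * k + 3 - x) g). \<forall>y\<in>set (map (\<lambda>x. x + (2 * k + 2)) d). x < y"
    using g d by (auto simp: is_perm_def)
  show ?thesis
    unfolding dumont_join_def contains_4213_append_21_iff[OF a_b] G D ..
qed

lemma dumont_join_mem_iff:
  assumes g: "is_perm (2 * k) g" and d: "is_perm (2 * l) d"
  shows "dumont_join k g d \<in> dumont1_avoid (Suc (k + l)) {[4,2,1,3]} \<longleftrightarrow>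
    g \<in> dumont1_avoid k {[1,3,4,2]} \<and> d \<in> dumont1_avoid l {[4,2,1,3]}"
  using is_perm_dumont_join[OF g d] dumont1_cond_dumont_join_iff[OF g]
    contains_4213_dumont_join_iff[OF g d] g d
  by (auto simp: in_dumont1_avoid_singleton_iff)

lemma dumont_join_inj:
  assumes g: "is_perm (2 * k) g" and g': "is_perm (2 * k') g'"
    and eq: "dumont_join k g d = dumont_join k' g' d'"
  shows "k = k' \<and> g = g' \<and> d = d'"
proof -
  have "takeWhile (\<lambda>x. x \<noteq> 2) (dumont_join k g d) = map (\<lambda>x. 2 * k + 3 - x) g"
    if "is_perm (2 * k) g" for k g d
  proof -
    have "x \<noteq> 2" if "x \<in> set (map (\<lambda>x. 2 * k + 3 - x) g)" for x
      using that \<open>is_perm (2 * k) g\<close> by (auto simp: is_perm_def)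
    then show ?thesis
      unfolding dumont_join_def by (subst takeWhile_append2) auto
  qed
  from arg_cong[OF eq, of "takeWhile (\<lambda>x. x \<noteq> 2)"] this[OF g] this[OF g']
  have G: "map (\<lambda>x. 2 * k + 3 - x) g = map (\<lambda>x. 2 * k' + 3 - x) g'"
    by simp
  then have "k = k'"
    using g g' by (metis is_perm_def length_map mult_cancel_left zero_neq_numeral)
  moreover have "inj_on (\<lambda>x. 2 * k + 3 - x) (set g \<union> set g')"
    using g g' \<open>k = k'\<close> by (auto simp: is_perm_def intro!: inj_onI)
  moreover have "map (\<lambda>x. x + (2 * k + 2)) d = map (\<lambda>x. x + (2 * k + 2)) d'"
    using eq G \<open>k = k'\<close> by (simp add: dumont_join_def)
  ultimately show ?thesis
    using G by (simp add: inj_on_map_eq_map inj_on_def)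
qed

lemma dumont1_avoid_4213_Suc_split:
  assumes "p \<in> dumont1_avoid (Suc n) {[4,2,1,3]}"
  obtains a b where "p = a @ [2, 1] @ b" "even (length a)"
    "set a = {3..<length a + 3}" "set b = {length a + 3..<2 * n + 3}"
proof -
  have perm: "is_perm (2 * Suc n) p" and dum: "dumont1_cond p"
    and avoid: "\<not> contains_pattern p [4,2,1,3]"
    using assms by (simp_all add: in_dumont1_avoid_singleton_iff)
  obtain a b where p: "p = a @ [2, 1] @ b"
    using dumont1_cond_split_21[OF dum] perm by (auto simp: is_perm_def)
  have dist: "distinct (a @ [2, 1] @ b)" and set_p: "set (a @ [2, 1] @ b) = {1..2 * n + 2}"
    using perm by (simp_all add: p is_perm_def)
  have "set a \<union> set b = set (a @ [2, 1] @ b) - {1, 2}"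
    using dist by auto
  also have "\<dots> = {3..<2 * n + 3}"
    unfolding set_p by auto
  finally have ab: "set a \<union> set b = {3..<2 * n + 3}" .
  have "\<forall>x\<in>set a. \<forall>y\<in>set b. x < y"
  proof (intro ballI)
    fix x y assume "x \<in> set a" "y \<in> set b"
    moreover have "2 < y" "x \<noteq> y"
      using \<open>x \<in> set a\<close> \<open>y \<in> set b\<close> ab dist by auto
    ultimately show "x < y"
      using avoids_4213_append_21_le avoid p by fastforce
  qed
  from atLeastLessThan_split_if_less[OF ab this]
  have a: "set a = {3..<length a + 3}" and b: "set b = {length a + 3..<2 * n + 3}"
    using dist distinct_card[of a] by (simp_all add: add.commute)
  have "even (length a + 2)" if "a \<noteq> []"
  proof (rule successively_dumont_step_max_even)
    have "successively dumont_step ((a @ [2]) @ 1 # b)"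
      using dum unfolding p dumont1_cond_iff_successively by simp
    then show "successively dumont_step (a @ [2])"
      unfolding successively_append_iff by blast
    show "distinct (a @ [2])"
      using dist by simp
    show "length a + 2 \<in> set (a @ [2])" "length a + 2 \<noteq> last (a @ [2])"
      using that by (simp_all add: a Suc_le_eq)
    show "\<forall>y\<in>set (a @ [2]). y \<le> length a + 2"
      using a by auto
  qed
  then have "even (length a)"
    by (cases "a = []") auto
  with p a b show thesis
    using that by blast
qed

lemma dumont1_avoid_4213_Suc_decompose:
  assumes "p \<in> dumont1_avoid (Suc n) {[4,2,1,3]}"
  obtains k g d where "k \<le> n" "is_perm (2 * k) g" "is_perm (2 * (n - k)) d" "p = dumont_join k g d"
proof -
  obtain a b where p: "p = a @ [2, 1] @ b" "even (length a)"
    and a: "set a = {3..<length a + 3}" and b: "set b = {length a + 3..<2 * n + 3}"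
    using dumont1_avoid_4213_Suc_split[OF assms] .
  from p(2) obtain k where k: "length a = 2 * k"
    by (rule evenE)
  have dist: "distinct a" "distinct b" and "length p = 2 * Suc n"
    using assms by (auto simp: in_dumont1_avoid_singleton_iff is_perm_def p)
  then have "k \<le> n" and len_b: "length b = 2 * (n - k)"
    using k p(1) by auto
  define g where "g = map (\<lambda>x. 2 * k + 3 - x) a"
  define d where "d = map (\<lambda>x. x - (2 * k + 2)) b"
  have "is_perm (2 * k) g"
  proof (rule is_permI)
    have "inj_on (\<lambda>x. 2 * k + 3 - x) (set a)"
      using a k by (auto intro!: inj_onI)
    then show "distinct g"
      using dist by (simp add: g_def distinct_map)
  qed (use a k in \<open>auto simp: g_def\<close>)
  moreover have "is_perm (2 * (n - k)) d"
  proof (rule is_permI)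
    have "inj_on (\<lambda>x. x - (2 * k + 2)) (set b)"
      using b k by (auto intro!: inj_onI)
    then show "distinct d"
      using dist by (simp add: d_def distinct_map)
  qed (use b k len_b in \<open>auto simp: d_def\<close>)
  moreover have "map (\<lambda>x. 2 * k + 3 - x) g = a"
    using a k by (auto simp: g_def intro!: map_idI)
  moreover have "map (\<lambda>x. x + (2 * k + 2)) d = b"
    using b k by (auto simp: d_def intro!: map_idI)
  ultimately show thesis
    using that \<open>k \<le> n\<close> p(1) by (simp add: dumont_join_def)
qed

lemma dumont1_avoid_4213_Suc_eq_image:
  "dumont1_avoid (Suc n) {[4,2,1,3]} = (\<lambda>(k, g, d). dumont_join k g d) `
     (SIGMA k:{..n}. dumont1_avoid k {[1,3,4,2]} \<times> dumont1_avoid (n - k) {[4,2,1,3]})"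
proof (intro equalityI subsetI)
  fix p assume p: "p \<in> dumont1_avoid (Suc n) {[4,2,1,3]}"
  then obtain k g d where k: "k \<le> n" and gd: "is_perm (2 * k) g" "is_perm (2 * (n - k)) d"
    and p_eq: "p = dumont_join k g d"
    by (rule dumont1_avoid_4213_Suc_decompose)
  with p have "g \<in> dumont1_avoid k {[1,3,4,2]} \<and> d \<in> dumont1_avoid (n - k) {[4,2,1,3]}"
    using dumont_join_mem_iff[OF gd] by simp
  with k p_eq show "p \<in> (\<lambda>(k, g, d). dumont_join k g d) `
     (SIGMA k:{..n}. dumont1_avoid k {[1,3,4,2]} \<times> dumont1_avoid (n - k) {[4,2,1,3]})"
    by force
next
  fix p assume "p \<in> (\<lambda>(k, g, d). dumont_join k g d) `
     (SIGMA k:{..n}. dumont1_avoid k {[1,3,4,2]} \<times> dumont1_avoid (n - k) {[4,2,1,3]})"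
  then obtain k g d where k: "k \<le> n" and g: "g \<in> dumont1_avoid k {[1,3,4,2]}"
    and d: "d \<in> dumont1_avoid (n - k) {[4,2,1,3]}" and p_eq: "p = dumont_join k g d"
    by auto
  have "is_perm (2 * k) g" "is_perm (2 * (n - k)) d"
    using g d by (simp_all add: in_dumont1_avoid_singleton_iff)
  from dumont_join_mem_iff[OF this] g d k p_eq
  show "p \<in> dumont1_avoid (Suc n) {[4,2,1,3]}"
    by simp
qed

lemma card_dumont1_avoid_4213_Suc:
  "card (dumont1_avoid (Suc n) {[4,2,1,3]}) =
     (\<Sum>k\<le>n. card (dumont1_avoid k {[1,3,4,2]}) * card (dumont1_avoid (n - k) {[4,2,1,3]}))"
proof -
  have "inj_on (\<lambda>(k, g, d). dumont_join k g d)
     (SIGMA k:{..n}. dumont1_avoid k {[1,3,4,2]} \<times> dumont1_avoid (n - k) {[4,2,1,3]})"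
    by (intro inj_onI) (auto simp: in_dumont1_avoid_singleton_iff dest: dumont_join_inj)
  then show ?thesis
    unfolding dumont1_avoid_4213_Suc_eq_image
    by (simp add: card_image card_cartesian_product finite_dumont1_avoid)
qed

unbundle fps_syntax

lemma fps_eq_inverse_one_minus_X_mult:
  fixes A B :: "'a::field fps"
  assumes "A $ 0 = 1" "\<And>n. A $ Suc n = (\<Sum>k\<le>n. B $ k * A $ (n - k))"
  shows "A = inverse (1 - fps_X * B)"
proof -
  have "A $ m = (1 + fps_X * (B * A)) $ m" for m
  proof (cases m)
    case (Suc n)
    have "(1 + fps_X * (B * A)) $ Suc n = (B * A) $ n"
      by simp
    then show ?thesis
      using assms(2) by (simp add: Suc fps_mult_nth atLeast0AtMost)
  qed (simp add: assms(1))
  then have "A = 1 + fps_X * (B * A)"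
    by (rule fps_ext)
  then have "(1 - fps_X * B) * A = 1"
    by (simp add: algebra_simps)
  then show ?thesis
    by (rule fps_inverse_unique[symmetric])
qed

theorem lemma3p3:
  fixes A B :: "rat fps"
  assumes "A = Abs_fps (\<lambda>n. of_nat (card (dumont1_avoid n {[4,2,1,3]})))"
      and "B = Abs_fps (\<lambda>n. of_nat (card (dumont1_avoid n {[1,3,4,2]})))"
  shows "A = inverse (1 - fps_X * B)"
proof (rule fps_eq_inverse_one_minus_X_mult)
  show "A $ 0 = 1"
    using assms(1) by (simp add: dumont1_avoid_0)
  show "A $ Suc n = (\<Sum>k\<le>n. B $ k * A $ (n - k))" for n
    unfolding assms fps_nth_Abs_fps card_dumont1_avoid_4213_Suc by simp
qed

end
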